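(* Consider the filtered ring $\mathbf{Z}[x]/(x^4)$ with $x$ in filtration exactly $d$ for some $d\ge1$, and let $R$ be a filtered $\lambda$-ring structure on it. (1) If $\psi^p_R(x)\equiv px\pmod{x^2}$ for all primes $p$, then $R$ is isomorphic to the filtered $\lambda$-ring structure with $\psi^p(x)=(1+x)^p-1$ for all primes $p$. (2) If $\psi^p_R(x)\equiv p^2x\pmod{x^2}$ for all primes $p$, then $R$ is isomorphic to one of the following $60$ mutually non-isomorphic filtered $\lambda$-ring structures on $\mathbf{Z}[x]/(x^4)$: \[S(k,d_2)=\Bigl\{\psi^p(x)=p^2x+\frac{kp^2(p^2-1)}{12}x^2+d_px^3\Bigr\},\] where $k\in\{1,5\}$, $d_2\in\{0,2,4,\ldots,58\}$, and for odd primes $p$, \[d_p=\frac{p^2(p^4-1)d_2}{60}+\frac{k^2p^2(p^2-1)(p^2-4)}{360}.\] (3) If $\psi^p_R(x)\equiv b_px\pmod{x^2}$ with $b_p\ne0$ for all primes $p$, then there are only finitely many isomorphism classes of filtered $\lambda$-ring structures $S$ on $\mathbf{Z}[x]/(x^4)$ such that $\psi^p_S(x)\equiv b_px\pmod{x^2}$ for all primes $p$. (4) If $\psi^2_R(x)\equiv 0\pmod{x^2}$, then $R$ is of the form $S((c_p),(d_p))=\{\psi^p(x)=c_px^2+d_px^3\colon p\text{ prime}\}$. Any such collection of polynomials (with integers $c_p,d_p$) gives rise to a filtered $\lambda$-ring structure provided $\psi^p(x)\equiv x^p\pmod p$ for all primes $p$. Two such, $S((c_p),(d_p))$ and $S((\bar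 c_p),(\bar d_p))$, are isomorphic if and only if (i) $(c_p)=\pm(\bar c_p)$ and (ii) there exists an integer $\alpha$ with $\bar d_p=d_p+2c_p\alpha$ for all primes $p$.
   Context: A (special) $\lambda$-ring is a commutative ring with operations $\lambda^i$ satisfying the Atiyah–Tall axioms; a filtered $\lambda$-ring is a $\lambda$-ring with decreasing filtration by ideals $I^k$ closed under $\lambda^i$, $i\ge1$; isomorphisms are filtration-preserving $\lambda$-ring isomorphisms. The filtered ring $\mathbf{Z}[x]/(x^n)$ with $x$ in filtration $d$ has $I^k$ generated by the $x^j$ with $jd\ge k$. A filtered $\lambda$-ring structure $R$ on it is determined by its Adams operations on $x$, written $\psi^p_R(x)\in\mathbf{Z}[x]/(x^n)$ for primes $p$ (polynomials without constant term); a family of such polynomials defines a filtered $\lambda$-ring structure iff $\psi^p(\psi^q(x))=\psi^q(\psi^p(x))$ and $\psi^p(x)\equiv x^p\pmod p$ for all primes $p,q$. The notation $\{\psi^p(x)=\ldots\}$ denotes the filtered $\lambda$-ring structure with these Adams operations. *)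

theory Defs
  imports "HOL-Computational_Algebra.Polynomial" "HOL-Computational_Algebra.Primes"
begin

text \<open>The ring Z[x]/(x^4) is modelled by integer polynomials of degree < 4
(normal-form representatives); multiplication is followed by truncation.\<close>

definition trunc4 :: "int poly \<Rightarrow> int poly" where
  "trunc4 f = (\<Sum>i<4. monom (coeff f i) i)"

definition carrier4 :: "int poly set" where
  "carrier4 = {f. degree f < 4}"

text \<open>The ring endomorphism of Z[x]/(x^4) sending x to a (a without constant term):
y(x) is mapped to y(a), truncated.\<close>
definition adams_op :: "int poly \<Rightarrow> int poly \<Rightarrow> int poly" where
  "adams_op a y = trunc4 (pcompose y a)"

definition filt :: "nat \<Rightarrow> nat \<Rightarrow> int poly set" where
  "filt d k = {y \<in> carrier4. \<forall>j<4. j * d < k \<longrightarrow> coeff y j = 0}"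

text \<open>A filtered lambda-ring structure on Z[x]/(x^4), given by its Adams operations
psi p = psi^p(x) for primes p (values at non-primes are irrelevant).\<close>
definition lam_struct :: "(nat \<Rightarrow> int poly) \<Rightarrow> bool" where
  "lam_struct psi \<longleftrightarrow>
     (\<forall>p. prime p \<longrightarrow> degree (psi p) < 4 \<and> coeff (psi p) 0 = 0 \<and>
        (\<forall>i<4. coeff (psi p) i mod int p = coeff (monom 1 p :: int poly) i mod int p)) \<and>
     (\<forall>p q. prime p \<longrightarrow> prime q \<longrightarrow>
        adams_op (psi p) (psi q) = adams_op (psi q) (psi p))"

definition lam_iso :: "nat \<Rightarrow> (nat \<Rightarrow> int poly) \<Rightarrow> (nat \<Rightarrow> int poly) \<Rightarrow> bool" where
  "lam_iso d R S \<longleftrightarrow>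
     (\<exists>\<phi>. bij_betw \<phi> carrier4 carrier4 \<and>
        (\<forall>y\<in>carrier4. \<forall>z\<in>carrier4. \<phi> (y + z) = \<phi> y + \<phi> z \<and>
            \<phi> (trunc4 (y * z)) = trunc4 (\<phi> y * \<phi> z)) \<and>
        \<phi> 1 = 1 \<and>
        (\<forall>k. \<phi> ` filt d k = filt d k) \<and>
        (\<forall>p. prime p \<longrightarrow> (\<forall>y\<in>carrier4. \<phi> (adams_op (R p) y) = adams_op (S p) (\<phi> y))))"

definition struct_mult :: "nat \<Rightarrow> int poly" where
  "struct_mult p = trunc4 ((1 + [:0, 1:]) ^ p - 1)"

definition struct_S :: "int \<Rightarrow> int \<Rightarrow> nat \<Rightarrow> int poly" where
  "struct_S k d2 p =
     (let q = int p;
          dp = (if p = 2 then d2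
                else (q^2 * (q^4 - 1) * d2) div 60 + (k^2 * q^2 * (q^2 - 1) * (q^2 - 4)) div 360)
      in [:0, q^2, (k * q^2 * (q^2 - 1)) div 12, dp:])"

definition struct_cd :: "(nat \<Rightarrow> int) \<Rightarrow> (nat \<Rightarrow> int) \<Rightarrow> nat \<Rightarrow> int poly" where
  "struct_cd c e p = [:0, 0, c p, e p:]"

definition adams_cong :: "(nat \<Rightarrow> int poly) \<Rightarrow> bool" where
  "adams_cong psi \<longleftrightarrow> (\<forall>p. prime p \<longrightarrow>
     (\<forall>i<4. coeff (psi p) i mod int p = coeff (monom 1 p :: int poly) i mod int p))"

end

theory Submission
  imports Defs "HOL-Number_Theory.Cong"
begin

text \<open>Write \<psi>^p(x) = a_p x + b_p x^2 + c_p x^3. Each Adams operation is substitution of the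
  jet (a_p, b_p, c_p) of a power series without constant term, and \<psi>^p \<psi>^q = \<psi>^q \<psi>^p says that
  these jets commute under composition. A filtered ring automorphism of Z[x]/(x^4) is determined
  by the image of x, which has no constant term, so it is itself substitution of a jet, necessarily
  one with linear coefficient \<plusminus>1. Hence two structures are isomorphic iff their families of jets
  are simultaneously conjugate by such a unit jet.

  If A = a_2 is not 0 or \<plusminus>1 (which holds as soon as A \<noteq> 0, since A is even), an element of the
  centralizer of \<psi>^2 is determined by its linear coefficient, so a structure is determined up to
  isomorphism by the a_p and the conjugacy class of \<psi>^2. Conjugating by (1, \<alpha>, \<beta>) shifts b_2 by
  \<alpha> (A - A^2) and then c_2 by \<beta> (A - A^3), which leaves finitely many classes (part 3). For
  A = 2 and A = 4 the congruences \<psi>^p \<equiv> x^p mod p for p = 2, 3 and the commutation of \<psi>^2 with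
  \<psi>^3 pin \<psi>^2 down to the jet of (1 + x)^2 - 1 (part 1), respectively to that of one of the
  S(k, d2) (part 2). If A = 0, all a_p vanish, jets (0, c, e) compose to zero, and conjugation by
  (\<plusminus>1, \<alpha>, \<beta>) acts by c \<mapsto> \<plusminus>c, e \<mapsto> e + 2 c \<alpha> (part 4).\<close>

section \<open>The truncated polynomial ring\<close>

lemma coeff_pCons4:
  "coeff [:a, b, c, e:] i = (if i = 0 then a else if i = 1 then b else if i = 2 then c else if i = 3 then e else 0)"
  by (cases i; cases "i - 1"; cases "i - 2"; cases "i - 3"; auto simp: coeff_pCons split: nat.splits)

lemma trunc4_eq: "trunc4 f = [:coeff f 0, coeff f 1, coeff f 2, coeff f 3:]"
  by (simp add: poly_eq_iff trunc4_def coeff_sum coeff_monom coeff_pCons4)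

lemma trunc4_mult_pCons4:
  "trunc4 ([:y0, y1, y2, y3:] * [:z0, z1, z2, z3:]) =
     [:y0*z0, y0*z1 + y1*z0, y0*z2 + y1*z1 + y2*z0, y0*z3 + y1*z2 + y2*z1 + y3*z0:]"
  by (simp add: trunc4_eq eval_nat_numeral algebra_simps)

lemma pCons4_in_carrier4: "[:a, b, c, e:] \<in> carrier4"
proof -
  have "degree [:a, b, c, e:] \<le> 3"
    by (rule degree_le) (auto simp: coeff_pCons4)
  then show ?thesis by (simp add: carrier4_def)
qed

lemma carrier4_eq: "y \<in> carrier4 \<Longrightarrow> y = [:coeff y 0, coeff y 1, coeff y 2, coeff y 3:]"
  unfolding carrier4_def by (auto simp: poly_eq_iff coeff_pCons4 intro!: coeff_eq_0)

lemma trunc4_in_carrier4: "trunc4 f \<in> carrier4"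
  by (simp add: trunc4_eq pCons4_in_carrier4)

lemma smult_in_carrier4: "y \<in> carrier4 \<Longrightarrow> smult k y \<in> carrier4"
  unfolding carrier4_def using degree_smult_le[of k y] by simp

lemma add_in_carrier4: "y \<in> carrier4 \<Longrightarrow> z \<in> carrier4 \<Longrightarrow> y + z \<in> carrier4"
  unfolding carrier4_def using degree_add_le[of y 3 z] by simp

section \<open>Jets of substitutions\<close>

text \<open>(a, b, c) stands for the substitution x \<mapsto> a x + b x^2 + c x^3 modulo x^4, and
  jcomp f g is the jet of f \<circ> g.\<close>
type_synonym jet = "int \<times> int \<times> int"

fun jet_poly :: "jet \<Rightarrow> int poly" where
  "jet_poly (a, b, c) = [:0, a, b, c:]"

definition jet_of :: "int poly \<Rightarrow> jet" where
  "jet_of f = (coeff f 1, coeff f 2, coeff f 3)"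

fun jcomp :: "jet \<Rightarrow> jet \<Rightarrow> jet" where
  "jcomp (f1, f2, f3) (g1, g2, g3) = (f1*g1, f1*g2 + f2*g1^2, f1*g3 + 2*f2*g1*g2 + f3*g1^3)"

definition unit_jet :: "jet \<Rightarrow> bool" where
  "unit_jet g \<longleftrightarrow> fst g = 1 \<or> fst g = -1"

fun jinv :: "jet \<Rightarrow> jet" where
  "jinv (e, a, b) = (e, -e*a, 2*e*a^2 - b)"

definition jconj :: "jet \<Rightarrow> jet \<Rightarrow> jet" where
  "jconj g f = jcomp (jinv g) (jcomp f g)"

lemma jcomp_assoc: "jcomp (jcomp f g) h = jcomp f (jcomp g h)"
  by (cases f; cases g; cases h) (simp add: algebra_simps power2_eq_square power3_eq_cube)

lemma jcomp_id [simp]: "jcomp (1, 0, 0) f = f" "jcomp f (1, 0, 0) = f"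
  by (cases f; simp)+

lemma fst_jcomp: "fst (jcomp f g) = fst f * fst g"
  by (cases f; cases g; simp)

lemma jinv_jcomp: "unit_jet g \<Longrightarrow> jcomp (jinv g) g = (1, 0, 0)"
  and jcomp_jinv: "unit_jet g \<Longrightarrow> jcomp g (jinv g) = (1, 0, 0)"
  by (cases g; auto simp: unit_jet_def algebra_simps power2_eq_square power3_eq_cube)+

lemma jcomp_jconj: "unit_jet g \<Longrightarrow> jcomp g (jconj g f) = jcomp f g"
  by (simp add: jconj_def jcomp_assoc[symmetric] jcomp_jinv)

lemma fst_jconj: "unit_jet g \<Longrightarrow> fst (jconj g f) = fst f"
  by (cases g) (auto simp: unit_jet_def jconj_def fst_jcomp)

lemma jconj_commute:
  assumes "unit_jet g" "jcomp f h = jcomp h f"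
  shows "jcomp (jconj g f) (jconj g h) = jcomp (jconj g h) (jconj g f)"
proof -
  have cancel: "jcomp g (jcomp (jinv g) z) = z" for z
    using assms(1) by (simp add: jcomp_assoc[symmetric] jcomp_jinv)
  show ?thesis
    using assms(2) by (simp add: jconj_def jcomp_assoc cancel) (simp add: jcomp_assoc[symmetric])
qed

lemma jet_poly_inj: "jet_poly f = jet_poly g \<Longrightarrow> f = g"
  by (cases f; cases g; simp)

lemma jet_poly_jet_of: "f \<in> carrier4 \<Longrightarrow> coeff f 0 = 0 \<Longrightarrow> jet_poly (jet_of f) = f"
  using carrier4_eq[of f] by (simp add: jet_of_def)

lemma jet_poly_in_carrier4: "jet_poly f \<in> carrier4"
  by (cases f; simp add: pCons4_in_carrier4 del: pCons_0_0)

lemma adams_op_jet_poly_pCons4: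
  "adams_op (jet_poly (g1, g2, g3)) [:y0, y1, y2, y3:] =
     [:y0, y1*g1, y1*g2 + y2*g1^2, y1*g3 + 2*y2*g1*g2 + y3*g1^3:]"
  by (simp add: adams_op_def trunc4_eq pcompose_pCons eval_nat_numeral del: pCons_0_0)
     (simp add: algebra_simps power2_eq_square power3_eq_cube)

lemma adams_op_jet_poly: "adams_op (jet_poly g) (jet_poly f) = jet_poly (jcomp f g)"
proof (cases f; cases g)
  fix a b c g1 g2 g3
  assume "f = (a, b, c)" "g = (g1, g2, g3)"
  then show ?thesis using adams_op_jet_poly_pCons4[of g1 g2 g3 0 a b c] by simp
qed

lemma adams_op_in_carrier4: "adams_op a y \<in> carrier4"
  by (simp add: adams_op_def trunc4_in_carrier4)

lemma adams_op_jet_poly_carrier4: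
  assumes "y \<in> carrier4"
  shows "adams_op (jet_poly (g1, g2, g3)) y =
     [:coeff y 0, coeff y 1*g1, coeff y 1*g2 + coeff y 2*g1^2,
       coeff y 1*g3 + 2*coeff y 2*g1*g2 + coeff y 3*g1^3:]"
  by (subst carrier4_eq[OF assms]) (rule adams_op_jet_poly_pCons4)

lemma adams_op_adams_op:
  assumes "y \<in> carrier4"
  shows "adams_op (jet_poly h) (adams_op (jet_poly g) y) = adams_op (jet_poly (jcomp g h)) y"
  using assms
  by (cases g; cases h)
     (simp add: adams_op_jet_poly_carrier4 adams_op_jet_poly_pCons4 del: pCons_0_0 jet_poly.simps,
      simp add: algebra_simps power2_eq_square power3_eq_cube)

lemma adams_op_jet_id: "y \<in> carrier4 \<Longrightarrow> adams_op [:0, 1:] y = y"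
  using adams_op_jet_poly_carrier4[of y 1 0 0] carrier4_eq[of y] by simp

lemma adams_op_add: "adams_op a (y + z) = adams_op a y + adams_op a z"
  by (simp add: adams_op_def pcompose_add trunc4_eq)

lemma adams_op_one: "adams_op a 1 = 1"
  by (simp add: adams_op_def trunc4_eq pcompose_1)

lemma adams_op_trunc4_mult:
  assumes "y \<in> carrier4" "z \<in> carrier4"
  shows "adams_op (jet_poly g) (trunc4 (y * z)) =
           trunc4 (adams_op (jet_poly g) y * adams_op (jet_poly g) z)"
proof (cases g)
  case (fields g1 g2 g3)
  show ?thesis
    by (subst (1 2) carrier4_eq[OF assms(1)], subst (1 2) carrier4_eq[OF assms(2)])
       (simp only: fields trunc4_mult_pCons4 adams_op_jet_poly_pCons4,
        simp add: algebra_simps power2_eq_square power3_eq_cube del: pCons_0_0)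
qed

lemma adams_op_filt: "y \<in> filt d k \<Longrightarrow> adams_op (jet_poly g) y \<in> filt d k"
proof -
  assume y: "y \<in> filt d k"
  then have yc: "y \<in> carrier4" and vanish: "\<And>j. j < 4 \<Longrightarrow> j * d < k \<Longrightarrow> coeff y j = 0"
    by (auto simp: filt_def)
  obtain g1 g2 g3 where g: "g = (g1, g2, g3)" by (cases g)
  have "coeff (adams_op (jet_poly g) y) j = 0" if "j < 4" "j * d < k" for j
  proof -
    have "i \<le> j \<Longrightarrow> coeff y i = 0" for i
      using vanish[of i] that mult_le_mono1[of i j d] by fastforce
    then show ?thesis
      using that by (auto simp: g adams_op_jet_poly_carrier4[OF yc] coeff_pCons4 simp del: jet_poly.simps)
  qed
  then show ?thesis by (simp add: filt_def adams_op_in_carrier4)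
qed

section \<open>Isomorphisms are conjugations by unit jets\<close>

definition ring_hom4 :: "(int poly \<Rightarrow> int poly) \<Rightarrow> bool" where
  "ring_hom4 \<phi> \<longleftrightarrow>
     (\<forall>y\<in>carrier4. \<forall>z\<in>carrier4. \<phi> (y + z) = \<phi> y + \<phi> z \<and>
        \<phi> (trunc4 (y * z)) = trunc4 (\<phi> y * \<phi> z)) \<and> \<phi> 1 = 1"

lemma lam_iso_iff_ring_hom4:
  "lam_iso d R S \<longleftrightarrow>
     (\<exists>\<phi>. bij_betw \<phi> carrier4 carrier4 \<and> ring_hom4 \<phi> \<and> (\<forall>k. \<phi> ` filt d k = filt d k) \<and>
        (\<forall>p. prime p \<longrightarrow> (\<forall>y\<in>carrier4. \<phi> (adams_op (R p) y) = adams_op (S p) (\<phi> y))))"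
  unfolding lam_iso_def ring_hom4_def by blast

lemma ring_hom4_adams_op: "ring_hom4 (adams_op (jet_poly g))"
  by (simp add: ring_hom4_def adams_op_add adams_op_one adams_op_trunc4_mult)

lemma ring_hom4_smult:
  assumes "ring_hom4 \<phi>" "y \<in> carrier4"
  shows "\<phi> (smult k y) = smult k (\<phi> y)"
proof (induction k rule: int_induct[where k = 0])
  case base
  have "(0::int poly) \<in> carrier4" by (simp add: carrier4_def)
  then have "\<phi> (0 + 0) = \<phi> 0 + \<phi> 0"
    using assms(1) unfolding ring_hom4_def by blast
  then show "\<phi> (smult 0 y) = smult 0 (\<phi> y)" by simp
next
  case (step1 i)
  have "\<phi> (smult i y + y) = \<phi> (smult i y) + \<phi> y"
    using assms by (simp add: ring_hom4_def smult_in_carrier4)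
  then show ?case using step1 by (simp add: smult_add_left)
next
  case (step2 i)
  have "\<phi> (smult (i - 1) y + y) = \<phi> (smult (i - 1) y) + \<phi> y"
    using assms by (simp add: ring_hom4_def smult_in_carrier4)
  then show ?case using step2 by (simp add: smult_add_left smult_diff_left)
qed

text \<open>Every element of Z[x]/(x^4) is a Z-linear combination of 1, x, x^2 = trunc4 (x * x)
  and x^3 = trunc4 (x * x^2).\<close>
lemma ring_hom4_eqI:
  assumes \<phi>: "ring_hom4 \<phi>" and \<psi>: "ring_hom4 \<psi>" and x: "\<phi> [:0, 1:] = \<psi> [:0, 1:]"
    and y: "y \<in> carrier4"
  shows "\<phi> y = \<psi> y"
proof -
  define X1 X2 X3 :: "int poly" where "X1 = [:0, 1:]" and "X2 = [:0, 0, 1:]" and "X3 = [:0, 0, 0, 1:]"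
  have carrier: "1 \<in> carrier4" "X1 \<in> carrier4" "X2 \<in> carrier4" "X3 \<in> carrier4"
    using pCons4_in_carrier4[of 0 1 0 0]
      pCons4_in_carrier4[of 0 0 1 0] pCons4_in_carrier4[of 0 0 0 1]
    by (simp_all add: X1_def X2_def X3_def carrier4_def)
  have powers: "X2 = trunc4 (X1 * X1)" "X3 = trunc4 (X1 * X2)"
    by (simp_all add: X1_def X2_def X3_def trunc4_eq eval_nat_numeral)
  have mult: "\<chi> (trunc4 (y * z)) = trunc4 (\<chi> y * \<chi> z)"
    if "ring_hom4 \<chi>" "y \<in> carrier4" "z \<in> carrier4" for \<chi> y z
    using that unfolding ring_hom4_def by blast
  have agree1: "\<phi> X1 = \<psi> X1" using x by (simp add: X1_def)
  then have agree2: "\<phi> X2 = \<psi> X2"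
    unfolding powers(1) using mult[OF \<phi>] mult[OF \<psi>] carrier by simp
  have agree3: "\<phi> X3 = \<psi> X3"
    unfolding powers(2) using mult[OF \<phi>] mult[OF \<psi>] carrier agree1 agree2 by simp
  have agree: "\<phi> X1 = \<psi> X1" "\<phi> X2 = \<psi> X2" "\<phi> X3 = \<psi> X3" "\<phi> 1 = \<psi> 1"
    using agree1 agree2 agree3 \<phi> \<psi> by (simp_all add: ring_hom4_def)
  have decomp: "y = smult (coeff y 0) 1 + smult (coeff y 1) X1 + smult (coeff y 2) X2 + smult (coeff y 3) X3"
    by (subst carrier4_eq[OF y]) (simp add: X1_def X2_def X3_def)
  have "\<chi> y = smult (coeff y 0) (\<chi> 1) + smult (coeff y 1) (\<chi> X1) + smult (coeff y 2) (\<chi> X2)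
          + smult (coeff y 3) (\<chi> X3)" if \<chi>: "ring_hom4 \<chi>" for \<chi>
  proof -
    have add: "\<chi> (u + v) = \<chi> u + \<chi> v" if "u \<in> carrier4" "v \<in> carrier4" for u v
      using \<chi> that unfolding ring_hom4_def by blast
    show ?thesis
      by (subst decomp)
         (simp only: add add_in_carrier4 smult_in_carrier4 carrier ring_hom4_smult[OF \<chi>])
  qed
  from this[OF \<phi>] this[OF \<psi>] show ?thesis by (simp add: agree)
qed

lemma lam_iso_if_conj:
  assumes g: "unit_jet g"
    and S: "\<And>p. prime p \<Longrightarrow> S p = jet_poly (s p)" and T: "\<And>p. prime p \<Longrightarrow> T p = jet_poly (t p)"
    and conj: "\<And>p. prime p \<Longrightarrow> jcomp (s p) g = jcomp g (t p)"
  shows "lam_iso d S T"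
proof -
  let ?\<phi> = "adams_op (jet_poly g)" and ?\<phi>' = "adams_op (jet_poly (jinv g))"
  have inverse: "?\<phi>' (?\<phi> y) = y" "?\<phi> (?\<phi>' y) = y" if "y \<in> carrier4" for y
    using g that by (simp_all add: adams_op_adams_op jcomp_jinv jinv_jcomp adams_op_jet_id)
  have "bij_betw ?\<phi> carrier4 carrier4"
    by (rule bij_betw_byWitness[where f' = ?\<phi>']) (auto simp: inverse adams_op_in_carrier4)
  moreover have "?\<phi> ` filt d k = filt d k" for k
  proof
    show "?\<phi> ` filt d k \<subseteq> filt d k" by (auto simp: adams_op_filt)
    show "filt d k \<subseteq> ?\<phi> ` filt d k"
    proof
      fix z assume z: "z \<in> filt d k"
      then have "z = ?\<phi> (?\<phi>' z)" using inverse by (simp add: filt_def)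
      then show "z \<in> ?\<phi> ` filt d k" using z adams_op_filt by blast
    qed
  qed
  moreover have "?\<phi> (adams_op (S p) y) = adams_op (T p) (?\<phi> y)" if "prime p" "y \<in> carrier4" for p y
    using that by (simp add: S T adams_op_adams_op conj)
  ultimately show ?thesis
    unfolding lam_iso_iff_ring_hom4 using ring_hom4_adams_op by blast
qed

lemma lam_iso_imp_conj:
  assumes d: "d \<ge> 1" and iso: "lam_iso d S T"
    and S: "\<And>p. prime p \<Longrightarrow> S p = jet_poly (s p)" and T: "\<And>p. prime p \<Longrightarrow> T p = jet_poly (t p)"
  obtains g where "unit_jet g" "\<And>p. prime p \<Longrightarrow> jcomp (s p) g = jcomp g (t p)"
proof -
  obtain \<phi> where bij: "bij_betw \<phi> carrier4 carrier4" and hom: "ring_hom4 \<phi>"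
    and filt: "\<forall>k. \<phi> ` filt d k = filt d k"
    and adams: "\<forall>p. prime p \<longrightarrow> (\<forall>y\<in>carrier4. \<phi> (adams_op (S p) y) = adams_op (T p) (\<phi> y))"
    using iso unfolding lam_iso_iff_ring_hom4 by (elim exE conjE)
  define X :: "int poly" where "X = jet_poly (1, 0, 0)"
  have X_carrier: "X \<in> carrier4" by (simp add: X_def jet_poly_in_carrier4 del: jet_poly.simps)
  have "X \<in> filt d 1" using d X_carrier by (auto simp: filt_def X_def)
  then have "\<phi> X \<in> filt d 1" using filt by blast
  then have "\<phi> X \<in> carrier4" "coeff (\<phi> X) 0 = 0" unfolding filt_def by force+
  then have "\<phi> X = jet_poly (jet_of (\<phi> X))" by (simp add: jet_poly_jet_of)
  then obtain g where \<phi>X: "\<phi> X = jet_poly g" by blast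
  have \<phi>_eq: "\<phi> y = adams_op (jet_poly g) y" if "y \<in> carrier4" for y
  proof (rule ring_hom4_eqI[OF hom ring_hom4_adams_op _ that])
    show "\<phi> [:0, 1:] = adams_op (jet_poly g) [:0, 1:]"
      using \<phi>X adams_op_jet_poly[of g "(1, 0, 0)"] by (simp add: X_def)
  qed
  show thesis
  proof
    have "X \<in> \<phi> ` carrier4" using bij X_carrier by (simp add: bij_betw_def)
    then obtain y where y: "y \<in> carrier4" "\<phi> y = X" by blast
    obtain g1 g2 g3 where g: "g = (g1, g2, g3)" by (cases g)
    have "coeff y 1 * g1 = coeff (\<phi> y) 1"
      using y(1) by (simp add: \<phi>_eq g adams_op_jet_poly_carrier4 del: jet_poly.simps)
    also have "\<dots> = 1" using y(2) by (simp add: X_def)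
    finally show "unit_jet g" by (auto simp: g unit_jet_def zmult_eq_1_iff)
  next
    fix p :: nat assume p: "prime p"
    have "jet_poly (jcomp (s p) g) = \<phi> (adams_op (S p) X)"
      by (simp add: p S X_def adams_op_jet_poly \<phi>_eq jet_poly_in_carrier4 del: jet_poly.simps)
    also have "\<dots> = jet_poly (jcomp g (t p))"
      by (simp add: p T adams X_carrier \<phi>X adams_op_jet_poly del: jet_poly.simps)
    finally show "jcomp (s p) g = jcomp g (t p)" by (rule jet_poly_inj)
  qed
qed

section \<open>Commuting families of jets\<close>

lemma jcomp_cancel_left: "unit_jet g \<Longrightarrow> jcomp g f = jcomp g h \<Longrightarrow> f = h"
  by (metis jcomp_assoc jinv_jcomp jcomp_id(1))

definition commuting_jets :: "(nat \<Rightarrow> jet) \<Rightarrow> bool" where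
  "commuting_jets s \<longleftrightarrow> (\<forall>p q. prime p \<longrightarrow> prime q \<longrightarrow> jcomp (s p) (s q) = jcomp (s q) (s p))"

lemma commuting_jets_jconj: "unit_jet g \<Longrightarrow> commuting_jets s \<Longrightarrow> commuting_jets (\<lambda>p. jconj g (s p))"
  by (simp add: commuting_jets_def jconj_commute)

lemma abs_gt_one_diff_powers_nonzero:
  fixes A :: int
  assumes "\<bar>A\<bar> > 1"
  shows "A - A^2 \<noteq> 0" "A - A^3 \<noteq> 0"
proof -
  have "A \<noteq> 0" "1 - A \<noteq> 0" "1 + A \<noteq> 0" using assms by auto
  moreover have "A - A^2 = A * (1 - A)" "A - A^3 = A * (1 - A) * (1 + A)"
    by (simp_all add: power2_eq_square power3_eq_cube algebra_simps)
  ultimately show "A - A^2 \<noteq> 0" "A - A^3 \<noteq> 0" by simp_all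
qed

text \<open>For w = (A, _, _), the x^2- and x^3-coefficients of the equation u \<circ> w = w \<circ> u are
  linear in those of u, with coefficients A - A^2 and A - A^3.\<close>
lemma jcomp_commute_unique:
  assumes "fst u = fst v" "jcomp u w = jcomp w u" "jcomp v w = jcomp w v" "\<bar>fst w\<bar> > 1"
  shows "u = v"
proof -
  obtain x c1 e1 where u: "u = (x, c1, e1)" by (cases u)
  obtain c2 e2 where v: "v = (x, c2, e2)" using assms(1) u by (cases v) auto
  obtain A a b where w: "w = (A, a, b)" by (cases w)
  have N2: "A - A^2 \<noteq> 0" and N3: "A - A^3 \<noteq> 0"
    using abs_gt_one_diff_powers_nonzero assms(4) w by auto
  have "(c1 - c2) * (A - A^2) = 0" using assms(2,3) by (simp add: u v w algebra_simps)
  then have c: "c1 = c2" using N2 by simp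
  have "(e1 - e2) * (A - A^3) = 0" using assms(2,3) by (simp add: u v w c algebra_simps)
  then show ?thesis using N3 c by (simp add: u v)
qed

lemma lam_struct_jet: "lam_struct R \<Longrightarrow> prime p \<Longrightarrow> R p = jet_poly (jet_of (R p))"
  by (simp add: lam_struct_def carrier4_def jet_poly_jet_of)

lemma lam_struct_commuting_jets:
  assumes R: "lam_struct R"
  shows "commuting_jets (\<lambda>p. jet_of (R p))"
  unfolding commuting_jets_def
proof (intro allI impI)
  fix p q :: nat assume "prime p" "prime q"
  then have "adams_op (R p) (R q) = adams_op (R q) (R p)" using R by (simp add: lam_struct_def)
  then have "jet_poly (jcomp (jet_of (R q)) (jet_of (R p))) = jet_poly (jcomp (jet_of (R p)) (jet_of (R q)))"
    using lam_struct_jet[OF R \<open>prime p\<close>] lam_struct_jet[OF R \<open>prime q\<close>] by (metis adams_op_jet_poly)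
  then show "jcomp (jet_of (R p)) (jet_of (R q)) = jcomp (jet_of (R q)) (jet_of (R p))"
    by (metis jet_poly_inj)
qed

lemma lam_struct_coeff_cong:
  "lam_struct R \<Longrightarrow> prime p \<Longrightarrow> i < 4 \<Longrightarrow> [coeff (R p) i = of_bool (p = i)] (mod int p)"
  by (auto simp: lam_struct_def coeff_monom cong_def)

lemma lam_structI:
  assumes "\<And>p. prime p \<Longrightarrow> R p = jet_poly (r p)" "commuting_jets r" "adams_cong R"
  shows "lam_struct R"
proof -
  have "degree (R p) < 4 \<and> coeff (R p) 0 = 0" if p: "prime p" for p
    using jet_poly_in_carrier4[of "r p"] by (cases "r p") (simp add: assms(1)[OF p] carrier4_def)
  moreover have "adams_op (R p) (R q) = adams_op (R q) (R p)" if "prime p" "prime q" for p q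
    using assms(2) that by (simp add: assms(1) adams_op_jet_poly commuting_jets_def)
  ultimately show ?thesis using assms(3) unfolding lam_struct_def adams_cong_def by blast
qed

lemma adams_cong_jetI:
  assumes "\<And>p. prime p \<Longrightarrow> R p = jet_poly (a p, b p, c p)"
    and "\<And>p. prime p \<Longrightarrow> [a p = 0] (mod int p)"
    and "\<And>p. prime p \<Longrightarrow> [b p = of_bool (p = 2)] (mod int p)"
    and "\<And>p. prime p \<Longrightarrow> [c p = of_bool (p = 3)] (mod int p)"
  shows "adams_cong R"
  unfolding adams_cong_def
proof (intro allI impI)
  fix p i :: nat assume p: "prime p" and i: "i < 4"
  then have "p \<noteq> 0" "p \<noteq> 1" using prime_gt_1_nat[OF p] by auto
  then consider "i = 0" | "i = 1" | "i = 2" | "i = 3" using i by linarith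
  then show "coeff (R p) i mod int p = coeff (monom 1 p :: int poly) i mod int p"
    using assms(2-4)[OF p] \<open>p \<noteq> 0\<close> \<open>p \<noteq> 1\<close>
    by cases (auto simp: assms(1)[OF p] coeff_monom cong_def coeff_pCons4)
qed

lemma conj_at_2_imp_conj:
  assumes g: "unit_jet g" and s: "commuting_jets s" and t: "commuting_jets t"
    and fst_eq: "\<And>p. prime p \<Longrightarrow> fst (s p) = fst (t p)" and big: "\<bar>fst (s 2)\<bar> > 1"
    and conj2: "jcomp (s 2) g = jcomp g (t 2)" and p: "prime p"
  shows "jcomp (s p) g = jcomp g (t p)"
proof -
  define u where "u q = jconj g (s q)" for q
  have "jcomp g (u 2) = jcomp g (t 2)" using g conj2 by (simp add: u_def jcomp_jconj)
  then have u2: "u 2 = t 2" by (rule jcomp_cancel_left[OF g])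
  have "u p = t p"
  proof (rule jcomp_commute_unique)
    show "fst (u p) = fst (t p)" using g fst_eq[OF p] by (simp add: u_def fst_jconj)
    show "jcomp (u p) (t 2) = jcomp (t 2) (u p)"
      using commuting_jets_jconj[OF g s] p u2 unfolding commuting_jets_def u_def
      by (metis two_is_prime_nat)
    show "jcomp (t p) (t 2) = jcomp (t 2) (t p)" using t p by (simp add: commuting_jets_def)
    show "\<bar>fst (t 2)\<bar> > 1" using big fst_eq[of 2] by simp
  qed
  then show ?thesis using g by (simp add: u_def jcomp_jconj[symmetric])
qed

lemma lam_iso_if_conj_at_2:
  assumes S: "lam_struct S" and T: "\<And>p. prime p \<Longrightarrow> T p = jet_poly (t p)" and t: "commuting_jets t"
    and fst_eq: "\<And>p. prime p \<Longrightarrow> coeff (S p) 1 = fst (t p)" and big: "\<bar>coeff (S 2) 1\<bar> > 1"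
    and g: "unit_jet g" and conj2: "jcomp (jet_of (S 2)) g = jcomp g (t 2)"
  shows "lam_iso d S T"
proof (rule lam_iso_if_conj[OF g lam_struct_jet[OF S] T])
  fix p :: nat assume "prime p"
  then show "jcomp (jet_of (S p)) g = jcomp g (t p)"
    using conj_at_2_imp_conj[OF g lam_struct_commuting_jets[OF S] t _ _ conj2] fst_eq big
    by (simp add: jet_of_def)
qed

section \<open>Finiteness\<close>

lemma jet_conj_into_box:
  fixes A c e :: int
  assumes "\<bar>A\<bar> > 1"
  obtains a b u v where "\<bar>u\<bar> \<le> \<bar>A - A^2\<bar>" "\<bar>v\<bar> \<le> \<bar>A - A^3\<bar>"
    "jcomp (A, c, e) (1, a, b) = jcomp (1, a, b) (A, u, v)"
proof -
  note N2 = abs_gt_one_diff_powers_nonzero(1)[OF assms]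
    and N3 = abs_gt_one_diff_powers_nonzero(2)[OF assms]
  define a where "a = - (c div (A - A^2))"
  define u where "u = c + a * (A - A^2)"
  define z where "z = e + 2*c*a - 2*a*A*u"
  define b where "b = - (z div (A - A^3))"
  define v where "v = z + b * (A - A^3)"
  have "u = c mod (A - A^2)" by (simp add: u_def a_def minus_div_mult_eq_mod[symmetric] algebra_simps)
  then have "\<bar>u\<bar> \<le> \<bar>A - A^2\<bar>" using abs_mod_less[OF N2, of c] by simp
  moreover have "v = z mod (A - A^3)" by (simp add: v_def b_def minus_div_mult_eq_mod[symmetric] algebra_simps)
  then have "\<bar>v\<bar> \<le> \<bar>A - A^3\<bar>" using abs_mod_less[OF N3, of z] by simp
  moreover have "jcomp (A, c, e) (1, a, b) = jcomp (1, a, b) (A, u, v)"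
    by (simp add: u_def v_def z_def algebra_simps power2_eq_square power3_eq_cube)
  ultimately show thesis using that by blast
qed

lemma finitely_many_lam_iso_classes:
  assumes R: "lam_struct R" and nonzero: "coeff (R 2) 1 \<noteq> 0"
  shows "\<exists>F. finite F \<and>
           (\<forall>S. lam_struct S \<and> (\<forall>p. prime p \<longrightarrow> coeff (S p) 1 = coeff (R p) 1) \<longrightarrow>
                (\<exists>T\<in>F. lam_iso d S T))"
proof -
  define A where "A = coeff (R 2) 1"
  have "[A = 0] (mod 2)" using lam_struct_coeff_cong[OF R two_is_prime_nat, of 1] by (simp add: A_def)
  then have big: "\<bar>A\<bar> > 1" using nonzero by (auto simp: A_def cong_def)
  define normal_form where "normal_form t u v \<longleftrightarrow>
      commuting_jets t \<and> (\<forall>p. prime p \<longrightarrow> fst (t p) = coeff (R p) 1) \<and> t 2 = (A, u, v)"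
    for t :: "nat \<Rightarrow> jet" and u v
  define box where "box = {-\<bar>A - A^2\<bar>..\<bar>A - A^2\<bar>} \<times> {-\<bar>A - A^3\<bar>..\<bar>A - A^3\<bar>}"
  \<comment> \<open>By conj_at_2_imp_conj, all families in normal form for the same (u, v) agree on
    primes, so the choice made by SOME does not matter.\<close>
  define F where "F = (\<lambda>(u, v) p. jet_poly ((SOME t. normal_form t u v) p)) ` box"
  have "\<exists>T\<in>F. lam_iso d S T"
    if S: "lam_struct S" and lin: "\<forall>p. prime p \<longrightarrow> coeff (S p) 1 = coeff (R p) 1" for S
  proof -
    obtain a b u v where "\<bar>u\<bar> \<le> \<bar>A - A^2\<bar>" "\<bar>v\<bar> \<le> \<bar>A - A^3\<bar>"
      and conj2: "jcomp (A, coeff (S 2) 2, coeff (S 2) 3) (1, a, b) = jcomp (1, a, b) (A, u, v)"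
      by (rule jet_conj_into_box[OF big])
    then have uv: "(u, v) \<in> box" by (simp add: box_def abs_le_iff)
    define g where "g = (1::int, a, b)"
    have g: "unit_jet g" by (simp add: g_def unit_jet_def)
    have S2: "jet_of (S 2) = (A, coeff (S 2) 2, coeff (S 2) 3)" using lin by (simp add: jet_of_def A_def)
    define t where "t p = jconj g (jet_of (S p))" for p
    have "jcomp g (t 2) = jcomp g (A, u, v)"
      using conj2 g by (simp add: t_def jcomp_jconj S2 g_def)
    then have "t 2 = (A, u, v)" by (rule jcomp_cancel_left[OF g])
    moreover have "commuting_jets t"
      unfolding t_def by (rule commuting_jets_jconj[OF g lam_struct_commuting_jets[OF S]])
    moreover have "fst (t p) = coeff (R p) 1" if "prime p" for p
      using g lin that by (simp add: t_def fst_jconj jet_of_def)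
    ultimately have "normal_form t u v" by (simp add: normal_form_def)
    then have nf: "normal_form (SOME t. normal_form t u v) u v" by (rule someI[where P = "\<lambda>t. normal_form t u v"])
    have "lam_iso d S (\<lambda>p. jet_poly ((SOME t. normal_form t u v) p))"
    proof (rule lam_iso_if_conj_at_2[OF S _ _ _ _ g])
      show "jcomp (jet_of (S 2)) g = jcomp g ((SOME t. normal_form t u v) 2)"
        using conj2 nf by (simp add: normal_form_def S2 g_def)
    qed (use nf lin big in \<open>auto simp: normal_form_def A_def\<close>)
    moreover have "(\<lambda>p. jet_poly ((SOME t. normal_form t u v) p)) \<in> F"
      using uv unfolding F_def by (rule rev_image_eqI) simp
    ultimately show ?thesis by blast
  qed
  moreover have "finite F" by (simp add: F_def box_def)
  ultimately show ?thesis by blast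
qed

section \<open>Structures without linear term\<close>

lemma struct_cd_eq: "struct_cd c e p = jet_poly (0, c p, e p)"
  by (simp add: struct_cd_def)

lemma lam_struct_linear_coeff_zero:
  assumes R: "lam_struct R" and zero: "coeff (R 2) 1 = 0" and p: "prime p"
  shows "coeff (R p) 1 = 0"
proof -
  define x c where "x = coeff (R p) 1" and "c = coeff (R 2) 2"
  have "jcomp (jet_of (R p)) (jet_of (R 2)) = jcomp (jet_of (R 2)) (jet_of (R p))"
    using lam_struct_commuting_jets[OF R] p by (simp add: commuting_jets_def)
  then have "x * c = c * x^2" using zero by (simp add: jet_of_def x_def c_def)
  moreover have "[c = 1] (mod 2)" using lam_struct_coeff_cong[OF R two_is_prime_nat, of 2] by (simp add: c_def)
  then have "c \<noteq> 0" by (auto simp: cong_def)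
  ultimately have "x = 0 \<or> x = 1" by (simp add: power2_eq_square)
  moreover have "[x = 0] (mod int p)"
    using lam_struct_coeff_cong[OF R p, of 1] prime_gt_1_nat[OF p] by (simp add: x_def)
  then have "x \<noteq> 1" using prime_gt_1_nat[OF p] by (auto simp: cong_def)
  ultimately show ?thesis by (simp add: x_def)
qed

lemma lam_struct_eq_struct_cd:
  assumes R: "lam_struct R" and zero: "coeff (R 2) 1 = 0"
  shows "\<exists>c e. \<forall>p. prime p \<longrightarrow> R p = struct_cd c e p"
proof (intro exI allI impI)
  fix p :: nat assume p: "prime p"
  show "R p = struct_cd (\<lambda>p. coeff (R p) 2) (\<lambda>p. coeff (R p) 3) p"
    using lam_struct_jet[OF R p] lam_struct_linear_coeff_zero[OF R zero p]
    by (simp add: struct_cd_eq jet_of_def)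
qed

lemma lam_struct_struct_cd: "adams_cong (struct_cd c e) \<Longrightarrow> lam_struct (struct_cd c e)"
  by (rule lam_structI[where r = "\<lambda>p. (0, c p, e p)"]) (simp_all add: struct_cd_eq commuting_jets_def)

lemma jcomp_conj_quadratic_iff:
  assumes "unit_jet (g, a, b)"
  shows "jcomp (0, c, e) (g, a, b) = jcomp (g, a, b) (0, c', e') \<longleftrightarrow> c' = g * c \<and> e' = e + 2 * c * a"
  using assms by (auto simp: unit_jet_def)

lemma struct_cd_lam_iso_iff:
  assumes d: "d \<ge> 1"
  shows "lam_iso d (struct_cd c e) (struct_cd c' e') \<longleftrightarrow>
           ((\<forall>p. prime p \<longrightarrow> c' p = c p) \<or> (\<forall>p. prime p \<longrightarrow> c' p = - c p)) \<and>
           (\<exists>\<alpha>::int. \<forall>p. prime p \<longrightarrow> e' p = e p + 2 * c p * \<alpha>)"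
    (is "?iso \<longleftrightarrow> ?sign \<and> ?shift")
proof
  assume ?iso
  then obtain g where g: "unit_jet g"
    and conj: "\<And>p. prime p \<Longrightarrow> jcomp (0, c p, e p) g = jcomp g (0, c' p, e' p)"
    using lam_iso_imp_conj[OF d \<open>?iso\<close> struct_cd_eq struct_cd_eq] by blast
  obtain \<epsilon> a b where g_eq: "g = (\<epsilon>, a, b)" by (cases g)
  have "c' p = \<epsilon> * c p \<and> e' p = e p + 2 * c p * a" if "prime p" for p
    using conj[OF that] jcomp_conj_quadratic_iff[of \<epsilon> a b] g by (simp add: g_eq)
  then show "?sign \<and> ?shift" using g by (auto simp: g_eq unit_jet_def)
next
  assume "?sign \<and> ?shift"
  then obtain \<epsilon> \<alpha> where \<epsilon>: "\<epsilon> = 1 \<or> \<epsilon> = (-1::int)" and c': "\<And>p. prime p \<Longrightarrow> c' p = \<epsilon> * c p"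
    and e': "\<And>p. prime p \<Longrightarrow> e' p = e p + 2 * c p * \<alpha>"
    by (metis mult_1 mult_minus1)
  have g: "unit_jet (\<epsilon>, \<alpha>, 0)" using \<epsilon> by (simp add: unit_jet_def)
  show ?iso
  proof (rule lam_iso_if_conj[OF g struct_cd_eq struct_cd_eq])
    fix p :: nat assume "prime p"
    then show "jcomp (0, c p, e p) (\<epsilon>, \<alpha>, 0) = jcomp (\<epsilon>, \<alpha>, 0) (0, c' p, e' p)"
      unfolding jcomp_conj_quadratic_iff[OF g] by (simp add: c' e')
  qed
qed

section \<open>The structures (1 + x)^p - 1 and S(k, d2)\<close>

lemma commuting_jets_if_mult:
  assumes "\<And>m n. jcomp (f m) (f n) = f (m * n)"
  shows "commuting_jets f"
  unfolding commuting_jets_def by (simp add: assms mult.commute)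

lemma int_choose_two: "2 * int (n choose 2) = int n * (int n - 1)"
proof (induction n)
  case (Suc n)
  have "Suc n choose 2 = n + (n choose 2)" by (simp add: numeral_2_eq_2)
  then show ?case using Suc by (simp add: algebra_simps)
qed simp

lemma int_choose_three: "6 * int (n choose 3) = int n * (int n - 1) * (int n - 2)"
proof (induction n)
  case (Suc n)
  have "Suc n choose 3 = (n choose 2) + (n choose 3)" by (simp add: numeral_3_eq_3 numeral_2_eq_2)
  then show ?case using Suc int_choose_two[of n] by (simp add: algebra_simps)
qed simp

definition mult_jet :: "nat \<Rightarrow> jet" where
  "mult_jet n = (int n, int (n choose 2), int (n choose 3))"

lemma fst_mult_jet: "fst (mult_jet n) = int n"
  and mult_jet_two: "mult_jet 2 = (2, 1, 0)"
  by (simp_all add: mult_jet_def binomial_eq_0)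

lemma struct_mult_eq: "struct_mult p = jet_poly (mult_jet p)"
proof -
  have "coeff ([:1, 1:] ^ p :: int poly) i = int (p choose i)" for i
  proof (cases "i \<le> p")
    case False
    have "degree ([:1, 1:] ^ p :: int poly) \<le> p" using degree_power_le[of "[:1, 1:]" p] by simp
    then show ?thesis using False by (simp add: coeff_eq_0)
  qed (simp add: coeff_linear_poly_power)
  moreover have "1 + [:0, 1:] = ([:1, 1:] :: int poly)" by (simp add: one_pCons)
  ultimately show ?thesis by (simp add: struct_mult_def trunc4_eq mult_jet_def)
qed

text \<open>(1 + x)^m - 1 evaluated at (1 + x)^n - 1 is (1 + x)^(m n) - 1.\<close>
lemma jcomp_mult_jet: "jcomp (mult_jet m) (mult_jet n) = mult_jet (m * n)"
proof -
  have "2 * int (m choose 2) = int m * (int m - 1)" "2 * int (n choose 2) = int n * (int n - 1)"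
    "2 * int (m * n choose 2) = int m * int n * (int m * int n - 1)"
    "6 * int (m choose 3) = int m * (int m - 1) * (int m - 2)" "6 * int (n choose 3) = int n * (int n - 1) * (int n - 2)"
    "6 * int (m * n choose 3) = int m * int n * (int m * int n - 1) * (int m * int n - 2)"
    using int_choose_two int_choose_three by simp_all
  then have "2 * (int m * int (n choose 2) + int (m choose 2) * (int n)^2) = 2 * int (m * n choose 2)"
    "6 * (int m * int (n choose 3) + 2 * int (m choose 2) * int n * int (n choose 2) + int (m choose 3) * (int n)^3)
       = 6 * int (m * n choose 3)"
    by algebra+
  then show ?thesis by (simp add: mult_jet_def)
qed

lemma lam_struct_struct_mult: "lam_struct struct_mult"
proof (rule lam_structI[OF struct_mult_eq commuting_jets_if_mult[OF jcomp_mult_jet]])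
  have choose_cong: "[int (p choose k) = of_bool (p = k)] (mod int p)" if "prime p" "0 < k" "k \<le> p" for p k
  proof (cases "k = p")
    case False
    then have "p dvd (p choose k)" using that by (intro dvd_choose_prime) auto
    then show ?thesis using False by (simp add: cong_0_iff flip: int_dvd_int_iff)
  qed simp
  show "adams_cong struct_mult"
  proof (rule adams_cong_jetI[OF struct_mult_eq[unfolded mult_jet_def]])
    fix p :: nat assume p: "prime p"
    show "[int p = 0] (mod int p)" by (simp add: cong_0_iff)
    show "[int (p choose 2) = of_bool (p = 2)] (mod int p)"
      using choose_cong[OF p, of 2] prime_ge_2_nat[OF p] by simp
    show "[int (p choose 3) = of_bool (p = 3)] (mod int p)"
      using choose_cong[OF p, of 3] prime_ge_2_nat[OF p] by (cases "p = 2") (simp_all add: binomial_eq_0)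
  qed
qed

lemma mult_jet_2_normal_form:
  fixes c e :: int
  assumes "[c = 1] (mod 2)" "[e = 0] (mod 2)" "[4 * e + c^2 = 1] (mod 3)"
  obtains a b where "jcomp (2, c, e) (1, a, b) = jcomp (1, a, b) (mult_jet 2)"
proof -
  define a e' where "a = c div 2" and "e' = e div 2"
  have c: "c = 2 * a + 1" and e: "e = 2 * e'"
    using assms(1,2) unfolding a_def e'_def cong_def by presburger+
  have "4 * e + c^2 = (8 * e' + 4 * a^2 + 4 * a) + 1" unfolding c e by algebra
  then have "[(8 * e' + 4 * a^2 + 4 * a) + 1 = 0 + 1] (mod 3)" using assms(3) by simp
  then have "3 dvd 2 * (8 * e' + 4 * a^2 + 4 * a) - 3 * (5 * e' + 2 * a^2 + 3 * a)"
    by (simp only: cong_add_rcancel cong_0_iff dvd_diff dvd_mult dvd_triv_left)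
  also have "\<dots> = 2 * a^2 - a + e'" by algebra
  finally obtain b where "2 * a^2 - a + e' = 3 * b" by blast
  then have "jcomp (2, c, e) (1, a, b) = jcomp (1, a, b) (mult_jet 2)"
    by (simp add: c e mult_jet_two power2_eq_square algebra_simps)
  then show thesis by (rule that)
qed

lemma lam_iso_struct_mult:
  assumes R: "lam_struct R" and lin: "\<forall>p. prime p \<longrightarrow> coeff (R p) 1 = int p"
  shows "lam_iso d R struct_mult"
proof -
  define c e c3 e3 where "c = coeff (R 2) 2" "e = coeff (R 2) 3" "c3 = coeff (R 3) 2" "e3 = coeff (R 3) 3"
  have prime3: "prime (3::nat)" by simp
  have R2: "jet_of (R 2) = (2, c, e)" and R3: "jet_of (R 3) = (3, c3, e3)"
    using lin by (simp_all add: jet_of_def c_e_c3_e3_def)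
  have "jcomp (3, c3, e3) (2, c, e) = jcomp (2, c, e) (3, c3, e3)"
    using lam_struct_commuting_jets[OF R] prime3 by (simp add: commuting_jets_def flip: R2 R3)
  then have "c3 = 3 * c" "6 * e3 = 6 * (4 * e + c^2)" by (simp_all add: power2_eq_square algebra_simps)
  then have "e3 = 4 * e + c^2" by simp
  moreover have "[c = 1] (mod 2)" "[e = 0] (mod 2)" "[e3 = 1] (mod 3)"
    using lam_struct_coeff_cong[OF R two_is_prime_nat, of 2] lam_struct_coeff_cong[OF R two_is_prime_nat, of 3]
      lam_struct_coeff_cong[OF R prime3, of 3]
    by (simp_all add: c_e_c3_e3_def)
  ultimately obtain a b where conj2: "jcomp (2, c, e) (1, a, b) = jcomp (1, a, b) (mult_jet 2)"
    by (metis mult_jet_2_normal_form)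
  show ?thesis
  proof (rule lam_iso_if_conj_at_2[OF R struct_mult_eq commuting_jets_if_mult[OF jcomp_mult_jet]])
    show "unit_jet (1, a, b)" by (simp add: unit_jet_def)
  qed (use lin conj2 R2 in \<open>simp_all add: fst_mult_jet\<close>)
qed

lemma dvd_by_residues:
  fixes f :: "int \<Rightarrow> int" and m :: int
  assumes "m > 0" and "\<And>x y. [x = y] (mod m) \<Longrightarrow> [f x = f y] (mod m)" and "\<forall>r\<in>{0..m - 1}. m dvd f r"
  shows "m dvd f q"
proof -
  have "[f (q mod m) = f q] (mod m)" by (rule assms(2)) (simp add: cong_def)
  moreover have "m dvd f (q mod m)" using assms(1,3) by (simp add: less_le_trans[of _ _ m])
  ultimately show ?thesis by (simp add: cong_dvd_iff)
qed

lemma twelve_dvd: "(12::int) dvd q^2 * (q^2 - 1)"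
proof -
  have cong: "[x^2 * (x^2 - 1) = y^2 * (y^2 - 1)] (mod m)" if "[x = y] (mod m)" for x y m :: int
    using that by (intro cong_mult cong_diff cong_pow cong_refl)
  have "4 dvd q^2 * (q^2 - 1)" "3 dvd q^2 * (q^2 - 1)"
    by (rule dvd_by_residues[OF _ cong]; simp add: upto_rec1 flip: set_upto)+
  then have "4 * 3 dvd q^2 * (q^2 - 1)"
    by (intro divides_mult) (simp_all add: coprime_iff_gcd_eq_1 gcd_code_int)
  then show ?thesis by simp
qed

lemma sixty_dvd: "(60::int) dvd q^2 * (q^4 - 1)"
proof -
  have cong: "[x^2 * (x^4 - 1) = y^2 * (y^4 - 1)] (mod m)" if "[x = y] (mod m)" for x y m :: int
    using that by (intro cong_mult cong_diff cong_pow cong_refl)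
  have "4 dvd q^2 * (q^4 - 1)" "3 dvd q^2 * (q^4 - 1)" "5 dvd q^2 * (q^4 - 1)"
    by (rule dvd_by_residues[OF _ cong]; simp add: upto_rec1 flip: set_upto)+
  then have "4 * 3 * 5 dvd q^2 * (q^4 - 1)"
    by (intro divides_mult) (simp_all add: coprime_iff_gcd_eq_1 gcd_code_int)
  then show ?thesis by simp
qed

lemma three_sixty_dvd: "(360::int) dvd q^2 * (q^2 - 1) * (q^2 - 4)"
proof -
  have cong: "[x^2 * (x^2 - 1) * (x^2 - 4) = y^2 * (y^2 - 1) * (y^2 - 4)] (mod m)"
    if "[x = y] (mod m)" for x y m :: int
    using that by (intro cong_mult cong_diff cong_pow cong_refl)
  have "8 dvd q^2 * (q^2 - 1) * (q^2 - 4)" "9 dvd q^2 * (q^2 - 1) * (q^2 - 4)"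
    "5 dvd q^2 * (q^2 - 1) * (q^2 - 4)"
    by (rule dvd_by_residues[OF _ cong]; simp add: upto_rec1 flip: set_upto)+
  then have "8 * 9 * 5 dvd q^2 * (q^2 - 1) * (q^2 - 4)"
    by (intro divides_mult) (simp_all add: coprime_iff_gcd_eq_1 gcd_code_int)
  then show ?thesis by simp
qed

definition S_jet :: "int \<Rightarrow> int \<Rightarrow> int \<Rightarrow> jet" where
  "S_jet k d2 q = (q^2, k * (q^2 * (q^2 - 1) div 12),
     (q^2 * (q^4 - 1) div 60) * d2 + k^2 * (q^2 * (q^2 - 1) * (q^2 - 4) div 360))"

lemma struct_S_eq: "struct_S k d2 p = jet_poly (S_jet k d2 (int p))"
proof (cases "p = 2")
  case False
  define q where "q = int p"
  have "k * q^2 * (q^2 - 1) div 12 = k * (q^2 * (q^2 - 1) div 12)"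
    using div_mult_swap[OF twelve_dvd[of q], of k] by (simp only: mult.assoc)
  moreover have "q^2 * (q^4 - 1) * d2 div 60 = (q^2 * (q^4 - 1) div 60) * d2"
    using dvd_div_mult[OF sixty_dvd[of q], of d2] by (simp only:)
  moreover have "k^2 * q^2 * (q^2 - 1) * (q^2 - 4) div 360 = k^2 * (q^2 * (q^2 - 1) * (q^2 - 4) div 360)"
    using div_mult_swap[OF three_sixty_dvd[of q], of "k^2"] by (simp only: mult.assoc)
  ultimately show ?thesis
    using False unfolding struct_S_def S_jet_def Let_def q_def[symmetric] by (simp only: if_False jet_poly.simps)
qed (simp add: struct_S_def S_jet_def)

lemma fst_S_jet: "fst (S_jet k d2 q) = q^2"
  and S_jet_two: "S_jet k d2 2 = (4, k, d2)"
  by (simp_all add: S_jet_def)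

text \<open>Over the rationals S(k, d2) is conjugate to \<psi>^n(x) = n^2 x, which explains why its
  jets are multiplicative in n.\<close>
lemma jcomp_S_jet: "jcomp (S_jet k d2 m) (S_jet k d2 n) = S_jet k d2 (m * n)"
proof -
  define g u w where "g q = q^2 * (q^2 - 1) div 12" and "u q = q^2 * (q^4 - 1) div 60"
    and "w q = q^2 * (q^2 - 1) * (q^2 - 4) div 360" for q :: int
  have exact: "12 * g q = q^2 * (q^2 - 1)" "60 * u q = q^2 * (q^4 - 1)"
    "360 * w q = q^2 * (q^2 - 1) * (q^2 - 4)" for q
    using twelve_dvd[of q] sixty_dvd[of q] three_sixty_dvd[of q] by (simp_all add: g_def u_def w_def)
  have "12 * (m^2 * (k * g n) + k * g m * (n^2)^2) = 12 * (k * g (m * n))"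
    using exact[of m] exact[of n] exact[of "m * n"] by algebra
  moreover have "21600 * (m^2 * (u n * d2 + k^2 * w n) + 2 * (k * g m) * n^2 * (k * g n)
      + (u m * d2 + k^2 * w m) * (n^2)^3) = 21600 * (u (m * n) * d2 + k^2 * w (m * n))"
    using exact[of m] exact[of n] exact[of "m * n"] by algebra
  ultimately show ?thesis by (simp add: S_jet_def flip: g_def u_def w_def power_mult_distrib)
qed

lemma prime_dvd_360_cases:
  assumes p: "prime p" and dvd: "int p dvd 360"
  shows "p = 2 \<or> p = 3 \<or> p = 5"
proof -
  have "p dvd 2 * (2 * (2 * (3 * (3 * 5))))" using dvd by (simp flip: int_dvd_int_iff)
  then have "p dvd 2 \<or> p dvd 3 \<or> p dvd 5" by (simp only: prime_dvd_mult_iff[OF p]) blast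
  moreover have "prime (2::nat)" "prime (3::nat)" "prime (5::nat)" by simp_all
  ultimately show ?thesis using primes_dvd_imp_eq[OF p] by blast
qed

lemma prime_dvd_S_jet_quotients:
  assumes p: "prime p" "p \<notin> {2, 3, 5}"
  defines "q \<equiv> int p"
  shows "q dvd q^2 * (q^2 - 1) div 12" "q dvd q^2 * (q^4 - 1) div 60"
    "q dvd q^2 * (q^2 - 1) * (q^2 - 4) div 360"
proof -
  have cancel: "q dvd x" if "m dvd 360" "m * x = q^2 * y" for m x y :: int
  proof -
    have "\<not> q dvd m" using prime_dvd_360_cases[OF p(1)] p(2) dvd_trans[OF _ that(1)] by (auto simp: q_def)
    moreover have "q dvd m * x" using that(2) by (simp add: power2_eq_square)
    ultimately show ?thesis using p(1) by (simp add: q_def prime_dvd_mult_iff)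
  qed
  show "q dvd q^2 * (q^2 - 1) div 12"
    by (rule cancel[of 12 _ "q^2 - 1"]) (simp_all add: twelve_dvd dvd_mult_div_cancel)
  show "q dvd q^2 * (q^4 - 1) div 60"
    by (rule cancel[of 60 _ "q^4 - 1"]) (simp_all add: sixty_dvd dvd_mult_div_cancel)
  show "q dvd q^2 * (q^2 - 1) * (q^2 - 4) div 360"
    by (rule cancel[of 360 _ "(q^2 - 1) * (q^2 - 4)"]) (simp_all add: three_sixty_dvd[of q, unfolded mult.assoc] dvd_mult_div_cancel mult.assoc)
qed

lemma lam_struct_struct_S:
  assumes k: "odd k" "\<not> 3 dvd k" and d2: "even d2"
  shows "lam_struct (struct_S k d2)"
proof (rule lam_structI[OF struct_S_eq])
  show "commuting_jets (\<lambda>p. S_jet k d2 (int p))"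
    by (rule commuting_jets_if_mult) (simp add: jcomp_S_jet)
  have k3: "[k^2 = 1] (mod 3)"
  proof -
    have "k mod 3 = 1 \<or> k mod 3 = 2" using k(2) by (auto simp: dvd_eq_mod_eq_0)
    then have "[k = 1] (mod 3) \<or> [k = 2] (mod 3)" by (auto simp: cong_def)
    then have "[k^2 = 1^2] (mod 3) \<or> [k^2 = 2^2] (mod 3)" using cong_pow by blast
    then show ?thesis unfolding cong_def by simp
  qed
  show "adams_cong (struct_S k d2)"
  proof (rule adams_cong_jetI[OF struct_S_eq[unfolded S_jet_def]])
    fix p :: nat assume p: "prime p"
    let ?q = "int p"
    show "[?q^2 = 0] (mod ?q)" by (simp add: cong_0_iff)
    show "[k * (?q^2 * (?q^2 - 1) div 12) = of_bool (p = 2)] (mod ?q)"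
    proof (cases "p \<in> {2, 3, 5}")
      case False
      then show ?thesis using prime_dvd_S_jet_quotients(1)[OF p False] by (simp add: cong_0_iff)
    qed (use k in \<open>auto simp: cong_def odd_iff_mod_2_eq_one\<close>)
    show "[?q^2 * (?q^4 - 1) div 60 * d2 + k^2 * (?q^2 * (?q^2 - 1) * (?q^2 - 4) div 360)
             = of_bool (p = 3)] (mod ?q)"
    proof (cases "p \<in> {2, 3, 5}")
      case False
      then show ?thesis using prime_dvd_S_jet_quotients(2,3)[OF p False] by (simp add: cong_0_iff)
    qed (use d2 k3 in \<open>auto simp: cong_def; presburger\<close>)
  qed
qed

lemma S_jet_2_normal_form:
  fixes c e :: int
  assumes "odd c" "\<not> 3 dvd c" "even e"
  obtains \<epsilon> a b k d2 where "unit_jet (\<epsilon>, a, b)" "k \<in> {1, 5}" "d2 \<in> {0..58}" "even d2"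
    "jcomp (4, c, e) (\<epsilon>, a, b) = jcomp (\<epsilon>, a, b) (S_jet k d2 2)"
proof -
  have "\<exists>a. c = 1 + 12 * a \<or> c = 5 + 12 * a \<or> c = -5 + 12 * a \<or> c = -1 + 12 * a"
    using assms(1,2) by presburger
  then obtain a where "c = 1 * 1 + 12 * a \<or> c = 1 * 5 + 12 * a \<or> c = -1 * 5 + 12 * a \<or> c = -1 * 1 + 12 * a"
    by auto
  then obtain \<epsilon> k where \<epsilon>: "\<epsilon> = 1 \<or> \<epsilon> = -1" and k: "k \<in> {1, 5}" and c: "c = \<epsilon> * k + 12 * a"
    by blast
  define z where "z = e + 2 * c * a - 8 * \<epsilon> * a * k"
  define d2 b where "d2 = z mod 60" and "b = \<epsilon> * (z div 60)"
  have z: "z = 60 * (z div 60) + d2" by (simp add: d2_def)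
  have "even z" using assms(3) by (simp add: z_def)
  then have "even d2" unfolding d2_def by (metis dvd_mod even_numeral)
  moreover have "0 \<le> d2" "d2 < 60" by (simp_all add: d2_def)
  ultimately have "d2 \<in> {0..58}" "even d2" by auto
  moreover have "jcomp (4, c, e) (\<epsilon>, a, b) = jcomp (\<epsilon>, a, b) (4, k, d2)"
    using \<epsilon>
  proof
    assume \<epsilon>1: "\<epsilon> = 1"
    have "4 * b + 2 * c * a + e = d2 + 8 * a * k + 64 * b"
      using z by (simp add: z_def b_def \<epsilon>1 algebra_simps)
    moreover have "4 * a + c = k + 16 * a" using c by (simp add: \<epsilon>1)
    ultimately show ?thesis by (simp add: \<epsilon>1 algebra_simps)
  next
    assume \<epsilon>1: "\<epsilon> = -1"
    have "4 * b - 2 * c * a - e = - d2 + 8 * a * k + 64 * b"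
      using z by (simp add: z_def b_def \<epsilon>1 algebra_simps)
    moreover have "4 * a + c = - k + 16 * a" using c by (simp add: \<epsilon>1)
    ultimately show ?thesis by (simp add: \<epsilon>1 algebra_simps)
  qed
  ultimately show thesis
    using that[of \<epsilon> a b k d2] \<epsilon> k by (simp add: unit_jet_def S_jet_two)
qed

lemma lam_iso_struct_S:
  assumes R: "lam_struct R" and lin: "\<forall>p. prime p \<longrightarrow> coeff (R p) 1 = int p ^ 2"
  obtains k d2 where "k \<in> {1, 5}" "d2 \<in> {0..58}" "even d2" "lam_iso d R (struct_S k d2)"
proof -
  define c e c3 e3 where "c = coeff (R 2) 2" "e = coeff (R 2) 3" "c3 = coeff (R 3) 2" "e3 = coeff (R 3) 3"
  have prime3: "prime (3::nat)" by simp
  have R2: "jet_of (R 2) = (4, c, e)" and R3: "jet_of (R 3) = (9, c3, e3)"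
    using lin by (simp_all add: jet_of_def c_e_c3_e3_def)
  have "jcomp (9, c3, e3) (4, c, e) = jcomp (4, c, e) (9, c3, e3)"
    using lam_struct_commuting_jets[OF R] prime3 by (simp add: commuting_jets_def flip: R2 R3)
  then have "c3 = 6 * c" "60 * e3 = 60 * (12 * e + c^2)" by (simp_all add: power2_eq_square algebra_simps)
  then have e3: "e3 = 12 * e + c^2" by simp
  have "[c = 1] (mod 2)" "[e = 0] (mod 2)" "[e3 = 1] (mod 3)"
    using lam_struct_coeff_cong[OF R two_is_prime_nat, of 2] lam_struct_coeff_cong[OF R two_is_prime_nat, of 3]
      lam_struct_coeff_cong[OF R prime3, of 3]
    by (simp_all add: c_e_c3_e3_def)
  then have c: "odd c" and e: "even e"
    by (simp_all add: cong_def odd_iff_mod_2_eq_one even_iff_mod_2_eq_zero)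
  have c3: "\<not> 3 dvd c"
  proof
    assume "3 dvd c"
    then have "3 dvd e3" by (simp add: e3 power2_eq_square)
    then show False using \<open>[e3 = 1] (mod 3)\<close> by (simp add: cong_def dvd_eq_mod_eq_0)
  qed
  obtain \<epsilon> a b k d2 where g: "unit_jet (\<epsilon>, a, b)" and kd2: "k \<in> {1, 5}" "d2 \<in> {0..58}" "even d2"
    and conj2: "jcomp (4, c, e) (\<epsilon>, a, b) = jcomp (\<epsilon>, a, b) (S_jet k d2 2)"
    by (rule S_jet_2_normal_form[OF c c3 e])
  have "lam_iso d R (struct_S k d2)"
  proof (rule lam_iso_if_conj_at_2[OF R, where T = "struct_S k d2" and t = "\<lambda>p. S_jet k d2 (int p)"])
    show "commuting_jets (\<lambda>p. S_jet k d2 (int p))"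
      by (rule commuting_jets_if_mult) (simp add: jcomp_S_jet)
    show "jcomp (jet_of (R 2)) (\<epsilon>, a, b) = jcomp (\<epsilon>, a, b) (S_jet k d2 (int 2))"
      using conj2 by (simp only: R2 of_nat_numeral)
  qed (use g lin in \<open>simp_all add: struct_S_eq fst_S_jet\<close>)
  then show thesis using that kd2 by blast
qed

lemma struct_S_not_lam_iso:
  assumes d: "d \<ge> 1" and k: "k \<in> {1, 5}" "k' \<in> {1, 5}"
    and d2: "0 \<le> d2" "d2 < 60" "0 \<le> d2'" "d2' < 60" and ne: "(k, d2) \<noteq> (k', d2')"
  shows "\<not> lam_iso d (struct_S k d2) (struct_S k' d2')"
proof
  assume iso: "lam_iso d (struct_S k d2) (struct_S k' d2')"
  obtain g where g: "unit_jet g"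
    and conj: "\<And>p. prime p \<Longrightarrow> jcomp (S_jet k d2 (int p)) g = jcomp g (S_jet k' d2' (int p))"
    by (rule lam_iso_imp_conj[OF d iso, where s = "\<lambda>p. S_jet k d2 (int p)" and t = "\<lambda>p. S_jet k' d2' (int p)"])
       (simp_all add: struct_S_eq)
  obtain \<epsilon> a b where g_eq: "g = (\<epsilon>, a, b)" by (cases g)
  have "jcomp (4, k, d2) (\<epsilon>, a, b) = jcomp (\<epsilon>, a, b) (4, k', d2')"
    using conj[OF two_is_prime_nat] by (simp add: g_eq S_jet_two)
  then have E1: "4 * a + k * \<epsilon>^2 = \<epsilon> * k' + 16 * a"
    and E2: "4 * b + 2 * k * \<epsilon> * a + d2 * \<epsilon>^3 = \<epsilon> * d2' + 8 * a * k' + 64 * b"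
    by (simp_all add: algebra_simps)
  from g consider "\<epsilon> = 1" | "\<epsilon> = -1" by (auto simp: unit_jet_def g_eq)
  then show False
  proof cases
    case 1
    then have "k - k' = 12 * a" using E1 by simp
    then have "a = 0" "k = k'" using k by (auto; presburger)+
    then have "d2 - d2' = 60 * b" using E2 1 by simp
    then have "- 1 < b" "b < 1" using d2 by linarith+
    then have "d2 = d2'" using \<open>d2 - d2' = 60 * b\<close> by simp
    then show False using ne \<open>k = k'\<close> by simp
  next
    case 2
    then have "k + k' = 12 * a" using E1 by simp
    then show False using k by (auto; presburger)
  qed
qed

theorem theorem1p6:
  fixes d :: nat
  assumes "d \<ge> 1"
  shows
  "(\<forall>R. lam_struct R \<and> (\<forall>p. prime p \<longrightarrow> coeff (R p) 1 = int p) \<longrightarrow>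
        lam_struct struct_mult \<and> lam_iso d R struct_mult)
   \<and>
   ((\<forall>k d2. k \<in> {1, 5} \<and> d2 \<in> {0..58} \<and> even d2 \<longrightarrow> lam_struct (struct_S k d2)) \<and>
    (\<forall>k d2 k' d2'. k \<in> {1, 5} \<and> d2 \<in> {0..58} \<and> even d2 \<and>
        k' \<in> {1, 5} \<and> d2' \<in> {0..58} \<and> even d2' \<and> (k, d2) \<noteq> (k', d2') \<longrightarrow>
        \<not> lam_iso d (struct_S k d2) (struct_S k' d2')) \<and>
    (\<forall>R. lam_struct R \<and> (\<forall>p. prime p \<longrightarrow> coeff (R p) 1 = int p ^ 2) \<longrightarrow>
        (\<exists>k d2. k \<in> {1, 5} \<and> d2 \<in> {0..58} \<and> even d2 \<and> lam_iso d R (struct_S k d2))))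
   \<and>
   (\<forall>R. lam_struct R \<and> (\<forall>p. prime p \<longrightarrow> coeff (R p) 1 \<noteq> 0) \<longrightarrow>
        (\<exists>F. finite F \<and>
           (\<forall>S. lam_struct S \<and> (\<forall>p. prime p \<longrightarrow> coeff (S p) 1 = coeff (R p) 1) \<longrightarrow>
                (\<exists>T\<in>F. lam_iso d S T))))
   \<and>
   ((\<forall>R. lam_struct R \<and> coeff (R 2) 1 = 0 \<longrightarrow>
        (\<exists>c e. \<forall>p. prime p \<longrightarrow> R p = struct_cd c e p)) \<and>
    (\<forall>c e. adams_cong (struct_cd c e) \<longrightarrow> lam_struct (struct_cd c e)) \<and>
    (\<forall>c e cb eb. adams_cong (struct_cd c e) \<and> adams_cong (struct_cd cb eb) \<longrightarrow>
        (lam_iso d (struct_cd c e) (struct_cd cb eb) \<longleftrightarrow>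
           (((\<forall>p. prime p \<longrightarrow> cb p = c p) \<or> (\<forall>p. prime p \<longrightarrow> cb p = - c p)) \<and>
            (\<exists>\<alpha>::int. \<forall>p. prime p \<longrightarrow> eb p = e p + 2 * c p * \<alpha>)))))"
  apply (intro conjI allI impI; (elim conjE)?)
  subgoal by (rule lam_struct_struct_mult)
  subgoal for R by (rule lam_iso_struct_mult)
  subgoal for k d2 by (rule lam_struct_struct_S) auto
  subgoal for k d2 k' d2' by (rule struct_S_not_lam_iso[OF assms]) auto
  subgoal for R by (rule lam_iso_struct_S) blast+
  subgoal for R using two_is_prime_nat by (intro finitely_many_lam_iso_classes) blast+
  subgoal for R by (rule lam_struct_eq_struct_cd)
  subgoal for c e by (rule lam_struct_struct_cd)
  subgoal for c e c' e' by (rule struct_cd_lam_iso_iff[OF assms])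
  done

end
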